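(* Let $\mathbb{H}$ be the real quaternions, $\sigma=\mathrm{Id}$, $\delta=0$. A vector $(a_1,\dots,a_r)\in\mathbb{H}^r$ is a $(\sigma,\delta)$-multiplicity sequence if and only if either $a_1=a_2=\dots=a_r\in\mathbb{R}$, or $a_1,\dots,a_r\in\mathbb{H}\setminus\mathbb{R}$ and for $i=1,\dots,r-1$: $$\mathrm{Re}(a_{i+1})=\mathrm{Re}(a_i),\quad |a_{i+1}|=|a_i|,\quad \overline{a_{i+1}}\ne a_i.$$ In particular $(a,\dots,a)\in\mathbb{H}^r$ is a $(\sigma,\delta)$-multiplicity sequence for every $a\in\mathbb{H}$ and $r\in\mathbb{Z}_+$.
   Context: $\mathbb{H}[x]=\mathbb{H}[x;\mathrm{Id},0]$ is the polynomial ring over the quaternions with $x$ commuting with coefficients. For $q=a+b\mathbf i+c\mathbf j+d\mathbf k$, $\mathrm{Re}(q)=a$, $\overline q=a-b\mathbf i-c\mathbf j-d\mathbf k$, $|q|=\sqrt{q\overline q}$. For $\mathbf a=(a_1,\dots,a_r)$, $P_{\mathbf a}=(x-a_r)\cdots(x-a_1)$; $\mathbf a$ is a $(\sigma,\delta)$-multiplicity sequence if $a_1$ is the only $b\in\mathbb{H}$ such that $x-b$ divides $P_{\mathbf a}$ on the right. *)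

theory Defs
  imports Complex_Main "HOL-Library.Poly_Mapping"
begin

datatype quat = Quat (qRe: real) (qI: real) (qJ: real) (qK: real)

lemma quat_eq_iff: "p = q \<longleftrightarrow> qRe p = qRe q \<and> qI p = qI q \<and> qJ p = qJ q \<and> qK p = qK q"
  by (cases p; cases q) auto

instantiation quat :: ring_1
begin
definition "0 = Quat 0 0 0 0"
definition "1 = Quat 1 0 0 0"
definition "p + q = Quat (qRe p + qRe q) (qI p + qI q) (qJ p + qJ q) (qK p + qK q)"
definition "p - q = Quat (qRe p - qRe q) (qI p - qI q) (qJ p - qJ q) (qK p - qK q)"
definition "- q = Quat (- qRe q) (- qI q) (- qJ q) (- qK q)"
definition "p * q = Quat
   (qRe p * qRe q - qI p * qI q - qJ p * qJ q - qK p * qK q)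
   (qRe p * qI q + qI p * qRe q + qJ p * qK q - qK p * qJ q)
   (qRe p * qJ q - qI p * qK q + qJ p * qRe q + qK p * qI q)
   (qRe p * qK q + qI p * qJ q - qJ p * qI q + qK p * qRe q)"
instance
  by standard (simp_all add: quat_eq_iff zero_quat_def one_quat_def plus_quat_def
      minus_quat_def uminus_quat_def times_quat_def algebra_simps)
end

definition qcnj :: "quat \<Rightarrow> quat" where
  "qcnj q = Quat (qRe q) (- qI q) (- qJ q) (- qK q)"

definition qnorm :: "quat \<Rightarrow> real" where
  "qnorm q = sqrt ((qRe q)\<^sup>2 + (qI q)\<^sup>2 + (qJ q)\<^sup>2 + (qK q)\<^sup>2)"

definition quat_of_real :: "real \<Rightarrow> quat" where
  "quat_of_real r = Quat r 0 0 0"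

definition quat_reals :: "quat set" where
  "quat_reals = range quat_of_real"

section \<open>The polynomial ring H[x] (x central): finitely supported maps nat \<Rightarrow> quat\<close>

type_synonym qpoly = "nat \<Rightarrow>\<^sub>0 quat"

definition qX :: qpoly where "qX = Poly_Mapping.single 1 1"

definition qC :: "quat \<Rightarrow> qpoly" where "qC c = Poly_Mapping.single 0 c"

definition right_dvd :: "qpoly \<Rightarrow> qpoly \<Rightarrow> bool" where
  "right_dvd d P \<longleftrightarrow> (\<exists>Q. P = Q * d)"

text \<open>For a = [a_1,...,a_r], P_a = (x - a_r) * ... * (x - a_1).\<close>
definition P_seq :: "quat list \<Rightarrow> qpoly" where
  "P_seq as = foldl (\<lambda>P a. (qX - qC a) * P) 1 as"

definition multiplicity_seq :: "quat list \<Rightarrow> bool" where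
  "multiplicity_seq as \<longleftrightarrow> as \<noteq> [] \<and> (\<forall>b. right_dvd (qX - qC b) (P_seq as) \<longleftrightarrow> b = hd as)"

end

theory Submission
  imports Defs
begin

(* Evaluate polynomials on the right, P(b) = sum_i p_i b^i: then x - b divides P on the
   right only if P(b) = 0, and ((x - a) G)(b) = g b - a g with g = G(b).  Writing g b = c g,
   the next value is (c - a) g and c is replaced by its conjugate under c - a, which is
   similar to b (same real part and norm); if c is similar to a, this conjugate is the
   quaternion conjugate of a.  Along a chain of similar non-real a_i with
   conj(a_(i+1)) ~= a_i the values stay nonzero for every b ~= a_1, so a_1 is the only right
   root; for a constant real sequence P(b) = (b - a)^r.
   Conversely, (x - a)(x - a') with a' not similar to a can be rewritten as
   (x - a'')(x - t) with t similar to a, so an entry not similar to a_1 yields a right root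
   similar to it.  And (x - conj l)(x - l) has real coefficients, hence is central, so both
   l and conj l are right roots of any P_a containing l, conj l consecutively: this forces l
   to be real. *)

section \<open>Quaternion arithmetic\<close>

definition qnorm_sq :: "quat \<Rightarrow> real" where
  "qnorm_sq q = (qRe q)\<^sup>2 + (qI q)\<^sup>2 + (qJ q)\<^sup>2 + (qK q)\<^sup>2"

lemmas quat_defs = quat_eq_iff zero_quat_def one_quat_def plus_quat_def minus_quat_def
  uminus_quat_def times_quat_def qcnj_def quat_of_real_def qnorm_sq_def

lemma qnorm_sq_eq_0_iff: "qnorm_sq q = 0 \<longleftrightarrow> q = 0"
  by (simp add: quat_defs add_nonneg_eq_0_iff)

lemma qnorm_sq_mult: "qnorm_sq (p * q) = qnorm_sq p * qnorm_sq q"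
  by (simp add: qnorm_sq_def times_quat_def power2_eq_square algebra_simps)

lemma qnorm_eq_iff: "qnorm a = qnorm b \<longleftrightarrow> qnorm_sq a = qnorm_sq b"
  by (simp add: qnorm_def qnorm_sq_def)

lemma quat_of_real_mult: "quat_of_real u * quat_of_real v = quat_of_real (u * v)"
  by (simp add: quat_defs)

lemma quat_of_real_commute: "quat_of_real u * q = q * quat_of_real u"
  by (simp add: quat_defs)

lemma quat_reals_iff: "q \<in> quat_reals \<longleftrightarrow> qI q = 0 \<and> qJ q = 0 \<and> qK q = 0"
  by (cases q) (auto simp: quat_reals_def quat_of_real_def)

lemma qcnj_mult_self: "qcnj q * q = quat_of_real (qnorm_sq q)"
  by (simp add: quat_defs power2_eq_square algebra_simps)

lemma mult_qcnj_self: "q * qcnj q = quat_of_real (qnorm_sq q)"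
  by (simp add: quat_defs power2_eq_square algebra_simps)

lemma qcnj_qcnj [simp]: "qcnj (qcnj q) = q"
  by (simp add: quat_defs)

lemma qcnj_eq_self_iff: "qcnj q = q \<longleftrightarrow> q \<in> quat_reals"
  by (auto simp: quat_reals_iff quat_defs)

lemma qRe_mult_commute: "qRe (p * q) = qRe (q * p)"
  by (simp add: times_quat_def)

instantiation quat :: division_ring
begin

definition "inverse q = quat_of_real (1 / qnorm_sq q) * qcnj q" for q :: quat

definition "p div q = p * inverse q" for p q :: quat

instance
proof
  fix q :: quat
  assume "q \<noteq> 0"
  then have n: "qnorm_sq q \<noteq> 0" by (simp add: qnorm_sq_eq_0_iff)
  show "inverse q * q = 1"
    using n by (simp add: inverse_quat_def mult.assoc qcnj_mult_self quat_of_real_mult)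
      (simp add: quat_defs)
  show "q * inverse q = 1"
    using n by (simp add: inverse_quat_def mult.assoc[symmetric] quat_of_real_commute)
      (simp add: mult.assoc mult_qcnj_self quat_of_real_mult quat_defs power2_eq_square)
qed (simp_all add: inverse_quat_def divide_quat_def quat_defs)

end

definition similar :: "quat \<Rightarrow> quat \<Rightarrow> bool" where
  "similar a b \<longleftrightarrow> qRe a = qRe b \<and> qnorm_sq a = qnorm_sq b"

lemma similar_qcnj: "similar (qcnj a) a"
  by (simp add: similar_def quat_defs)

lemma similar_real_eq: "similar a b \<Longrightarrow> b \<in> quat_reals \<Longrightarrow> a = b"
  by (auto simp: similar_def quat_reals_iff qnorm_sq_def quat_eq_iff add_nonneg_eq_0_iff)

lemma similar_conjugate:
  assumes "h \<noteq> 0"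
  shows "similar (h * c * inverse h) c"
proof -
  have "qRe (h * c * inverse h) = qRe (inverse h * h * c)"
    by (metis qRe_mult_commute mult.assoc)
  moreover have "qnorm_sq h * qnorm_sq (inverse h) = 1"
    using assms qnorm_sq_mult[of h "inverse h"] by (simp add: qnorm_sq_def one_quat_def)
  ultimately show ?thesis
    using assms by (simp add: similar_def qnorm_sq_mult)
qed

lemma quat_quadratic: "q * q = quat_of_real (2 * qRe q) * q - quat_of_real (qnorm_sq q)"
  by (simp add: quat_defs power2_eq_square algebra_simps)

lemma qcnj_eq: "qcnj q = quat_of_real (2 * qRe q) - q"
  by (simp add: quat_defs)

lemma similar_diff_mult_self:
  assumes "similar c a"
  shows "(c - a) * c = qcnj a * (c - a)"
proof -
  have "c * c = quat_of_real (2 * qRe a) * c - quat_of_real (qnorm_sq a)"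
    using quat_quadratic[of c] assms by (simp add: similar_def)
  then show ?thesis
    by (simp add: algebra_simps qcnj_eq quat_quadratic[of a])
qed

(* In H[x] this says (x - t)(x - a) = (x - (t + a - t'))(x - t'); the new right factor t'
   is t conjugated by t - conj a. *)
lemma similar_factor_exchange:
  assumes "\<not> similar t a"
  obtains t' where "similar t' t" and "(t + a - t') * t' = t * a"
proof -
  define h where "h = t - qcnj a"
  have "h \<noteq> 0"
    using assms similar_qcnj[of a] by (auto simp: h_def)
  define t' where "t' = h * t * inverse h"
  have t'h: "t' * h = h * t"
    using \<open>h \<noteq> 0\<close> by (simp add: t'_def mult.assoc)
  have "(t + a - t') * t' * h = (t + a - t') * (h * t)"
    by (simp add: mult.assoc t'h)
  also have "\<dots> = ((t + a) * h - t' * h) * t"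
    by (simp add: algebra_simps)
  also have "\<dots> = ((t + a) * h - h * t) * t"
    by (simp only: t'h)
  also have "\<dots> = t * a * h"
    by (simp add: h_def quat_defs algebra_simps)
  finally have "(t + a - t') * t' = t * a"
    using \<open>h \<noteq> 0\<close> by simp
  with similar_conjugate[OF \<open>h \<noteq> 0\<close>] show thesis
    by (auto simp: t'_def intro: that)
qed

lemma intertwining_step:
  assumes "g \<noteq> 0" and "g * b = c * g" and "c \<noteq> a"
  obtains c' where "g * b - a * g \<noteq> 0" and "(g * b - a * g) * b = c' * (g * b - a * g)"
    and "similar c' c" and "similar c a \<Longrightarrow> c' = qcnj a"
proof -
  define h where "h = c - a"
  have "h \<noteq> 0" using assms(3) by (simp add: h_def)
  define c' where "c' = h * c * inverse h"
  have hc: "h * c = c' * h"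
    using \<open>h \<noteq> 0\<close> by (simp add: c'_def mult.assoc)
  have hg: "g * b - a * g = h * g"
    using assms(2) by (simp add: h_def left_diff_distrib)
  show thesis
  proof
    show "g * b - a * g \<noteq> 0"
      using \<open>h \<noteq> 0\<close> assms(1) by (simp add: hg)
    show "(g * b - a * g) * b = c' * (g * b - a * g)"
    proof -
      have "(h * g) * b = (h * c) * g"
        by (simp add: mult.assoc assms(2))
      then show ?thesis
        by (simp add: hg hc mult.assoc)
    qed
    show "similar c' c"
      unfolding c'_def using \<open>h \<noteq> 0\<close> by (rule similar_conjugate)
    show "c' = qcnj a" if "similar c a"
    proof -
      have "h * c = qcnj a * h"
        using similar_diff_mult_self[OF that] by (simp add: h_def)
      then have "c' * h = qcnj a * h"
        by (simp add: hc)
      then show ?thesis using \<open>h \<noteq> 0\<close> by simp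
    qed
  qed
qed

section \<open>Polynomials over the quaternions\<close>

lemma Sum_any_when_add_eq:
  fixes f :: "nat \<Rightarrow> 'a::comm_monoid_add"
  shows "Sum_any (\<lambda>q. f q when k = l + q) = (f (k - l) when l \<le> k)"
proof -
  have "(\<lambda>q. (f q when k = l + q)) = (\<lambda>q. if q = k - l then (f q when l \<le> k) else 0)"
    by (auto simp: fun_eq_iff when_def)
  then show ?thesis by (simp only: Sum_any.delta)
qed

lemma lookup_mult_single_right:
  fixes p :: "nat \<Rightarrow>\<^sub>0 'a::semiring_0"
  shows "Poly_Mapping.lookup (p * Poly_Mapping.single d c) k
       = (if d \<le> k then Poly_Mapping.lookup p (k - d) * c else 0)"
proof -
  have "(\<lambda>l. Poly_Mapping.lookup p l * ((c when d = k - l) when l \<le> k))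
      = (\<lambda>l. if l = k - d then (Poly_Mapping.lookup p l * c when d \<le> k) else 0)"
    by (auto simp: fun_eq_iff when_def)
  then show ?thesis
    unfolding lookup_mult lookup_single Sum_any_when_add_eq
    by (simp only: Sum_any.delta) (simp add: when_def)
qed

lemma lookup_single_mult:
  fixes p :: "nat \<Rightarrow>\<^sub>0 'a::semiring_0"
  shows "Poly_Mapping.lookup (Poly_Mapping.single d c * p) k
       = (if d \<le> k then c * Poly_Mapping.lookup p (k - d) else 0)"
proof -
  have "(\<lambda>l. (c when d = l) * (Poly_Mapping.lookup p (k - l) when l \<le> k))
      = (\<lambda>l. if l = d then (c * Poly_Mapping.lookup p (k - d) when d \<le> k) else 0)"
    by (auto simp: fun_eq_iff when_def)
  then show ?thesis
    unfolding lookup_mult lookup_single Sum_any_when_add_eq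
    by (simp only: Sum_any.delta) (simp add: when_def)
qed

lemma single_mult_commute:
  fixes p :: "nat \<Rightarrow>\<^sub>0 'a::semiring_0"
  assumes "\<And>x. c * x = x * c"
  shows "Poly_Mapping.single d c * p = p * Poly_Mapping.single d c"
  by (rule poly_mapping_eqI) (simp add: lookup_single_mult lookup_mult_single_right assms)

lemma linear_factors_mult:
  "(qX - qC c) * (qX - qC d)
     = Poly_Mapping.single 2 1 - Poly_Mapping.single 1 (c + d) + Poly_Mapping.single 0 (c * d)"
  by (simp add: qX_def qC_def algebra_simps mult_single single_add single_diff numeral_2_eq_2)

lemma linear_factors_eq:
  "c + d = c' + d' \<Longrightarrow> c * d = c' * d' \<Longrightarrow>
    (qX - qC c) * (qX - qC d) = (qX - qC c') * (qX - qC d')"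
  by (simp add: linear_factors_mult)

lemma conj_factors_commute: "(qX - qC (qcnj c)) * (qX - qC c) = (qX - qC c) * (qX - qC (qcnj c))"
  by (rule linear_factors_eq) (simp_all add: add.commute qcnj_mult_self mult_qcnj_self)

lemma conj_factors_central:
  "(qX - qC (qcnj c)) * (qX - qC c) * p = p * ((qX - qC (qcnj c)) * (qX - qC c))"
proof -
  have "qcnj c + c = quat_of_real (2 * qRe c)"
    by (simp add: quat_defs)
  then have "(qX - qC (qcnj c)) * (qX - qC c) = Poly_Mapping.single 2 1
      - Poly_Mapping.single 1 (quat_of_real (2 * qRe c)) + Poly_Mapping.single 0 (quat_of_real (qnorm_sq c))"
    by (simp add: linear_factors_mult qcnj_mult_self)
  then show ?thesis
    by (simp only:) (simp add: ring_distribs single_mult_commute quat_of_real_commute)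
qed

lemma P_seq_snoc: "P_seq (L @ [a]) = (qX - qC a) * P_seq L"
  by (simp add: P_seq_def)

lemma P_seq_append: "P_seq (L @ M) = P_seq M * P_seq L"
  by (induction M rule: rev_induct)
    (simp_all add: P_seq_snoc mult.assoc P_seq_def[of "[]"] flip: append_assoc)

lemma right_dvd_P_seq_append: "right_dvd d (P_seq L) \<Longrightarrow> right_dvd d (P_seq (L @ M))"
  unfolding right_dvd_def P_seq_append by (metis mult.assoc)

lemma right_dvd_P_seq_hd: "right_dvd (qX - qC a) (P_seq (a # L))"
  using P_seq_append[of "[a]" L] unfolding right_dvd_def by (auto simp: P_seq_def)

section \<open>Right evaluation\<close>

definition eval_right :: "qpoly \<Rightarrow> quat \<Rightarrow> quat" where
  "eval_right P b = (\<Sum>i\<in>Poly_Mapping.keys P. Poly_Mapping.lookup P i * b ^ i)"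

lemma eval_right_superset:
  "finite A \<Longrightarrow> Poly_Mapping.keys P \<subseteq> A \<Longrightarrow>
    eval_right P b = (\<Sum>i\<in>A. Poly_Mapping.lookup P i * b ^ i)"
  unfolding eval_right_def by (rule sum.mono_neutral_left) (auto simp: in_keys_iff)

lemma eval_right_one [simp]: "eval_right 1 b = 1"
  by (simp add: eval_right_def)

lemma eval_right_diff: "eval_right (P - Q) b = eval_right P b - eval_right Q b"
proof -
  let ?A = "Poly_Mapping.keys P \<union> Poly_Mapping.keys Q"
  have "Poly_Mapping.keys (P - Q) \<subseteq> ?A"
    by (auto simp: in_keys_iff lookup_minus)
  then have "eval_right (P - Q) b = (\<Sum>i\<in>?A. Poly_Mapping.lookup (P - Q) i * b ^ i)"
    by (simp add: eval_right_superset)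
  also have "\<dots> = eval_right P b - eval_right Q b"
    by (simp add: lookup_minus left_diff_distrib sum_subtractf eval_right_superset[symmetric])
  finally show ?thesis .
qed

lemma keys_mult_single_subset:
  fixes P :: "nat \<Rightarrow>\<^sub>0 'a::semiring_0"
  shows "Poly_Mapping.keys (P * Poly_Mapping.single d c) \<subseteq> (\<lambda>i. i + d) ` Poly_Mapping.keys P"
    and "Poly_Mapping.keys (Poly_Mapping.single d c * P) \<subseteq> (\<lambda>i. i + d) ` Poly_Mapping.keys P"
proof -
  have "i \<in> (\<lambda>i. i + d) ` Poly_Mapping.keys P"
    if "d \<le> i" and "Poly_Mapping.lookup P (i - d) \<noteq> 0" for i
    using that by (intro image_eqI[of i _ "i - d"]) (simp_all add: in_keys_iff)
  then show "Poly_Mapping.keys (P * Poly_Mapping.single d c) \<subseteq> (\<lambda>i. i + d) ` Poly_Mapping.keys P"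
    and "Poly_Mapping.keys (Poly_Mapping.single d c * P) \<subseteq> (\<lambda>i. i + d) ` Poly_Mapping.keys P"
    by (auto simp: in_keys_iff lookup_mult_single_right lookup_single_mult
        split: if_splits dest!: mult_not_zero)
qed

lemma eval_right_single_mult:
  "eval_right (Poly_Mapping.single d c * P) b = c * eval_right P b * b ^ d"
proof -
  have "eval_right (Poly_Mapping.single d c * P) b
      = (\<Sum>i\<in>(\<lambda>i. i + d) ` Poly_Mapping.keys P.
           Poly_Mapping.lookup (Poly_Mapping.single d c * P) i * b ^ i)"
    by (simp add: eval_right_superset keys_mult_single_subset)
  also have "\<dots> = (\<Sum>i\<in>Poly_Mapping.keys P. c * (Poly_Mapping.lookup P i * b ^ i) * b ^ d)"
    by (simp add: sum.reindex lookup_single_mult power_add mult.assoc)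
  finally show ?thesis
    by (simp add: eval_right_def sum_distrib_left sum_distrib_right)
qed

lemma eval_right_mult_single:
  assumes "c * b = b * c"
  shows "eval_right (P * Poly_Mapping.single d c) b = eval_right P b * c * b ^ d"
proof -
  have commute: "c * (b ^ i * y) = b ^ i * (c * y)" for i y
    using power_commuting_commutes[OF assms[symmetric], of i] by (metis mult.assoc)
  have "eval_right (P * Poly_Mapping.single d c) b
      = (\<Sum>i\<in>(\<lambda>i. i + d) ` Poly_Mapping.keys P.
           Poly_Mapping.lookup (P * Poly_Mapping.single d c) i * b ^ i)"
    by (simp add: eval_right_superset keys_mult_single_subset)
  also have "\<dots> = (\<Sum>i\<in>Poly_Mapping.keys P. Poly_Mapping.lookup P i * b ^ i * c * b ^ d)"
    by (simp add: sum.reindex lookup_mult_single_right power_add commute mult.assoc)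
  finally show ?thesis
    by (simp add: eval_right_def sum_distrib_right)
qed

lemma eval_right_root: "right_dvd (qX - qC b) P \<Longrightarrow> eval_right P b = 0"
  by (auto simp: right_dvd_def right_diff_distrib eval_right_diff qX_def qC_def eval_right_mult_single)

lemma eval_right_linear_factor:
  "eval_right ((qX - qC a) * P) b = eval_right P b * b - a * eval_right P b"
  by (simp add: left_diff_distrib eval_right_diff qX_def qC_def eval_right_single_mult)

definition real_constant_seq :: "quat list \<Rightarrow> bool" where
  "real_constant_seq L \<longleftrightarrow> (\<forall>i < length L. L ! i = L ! 0) \<and> L ! 0 \<in> quat_reals"

definition sphere_chain :: "quat list \<Rightarrow> bool" where
  "sphere_chain L \<longleftrightarrow> (\<forall>i < length L. L ! i \<notin> quat_reals) \<and>
     (\<forall>i. i + 1 < length L \<longrightarrow>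
        qRe (L ! (i + 1)) = qRe (L ! i) \<and> qnorm (L ! (i + 1)) = qnorm (L ! i) \<and>
        qcnj (L ! (i + 1)) \<noteq> L ! i)"

definition chain_link :: "quat \<Rightarrow> quat \<Rightarrow> bool" where
  "chain_link a a' \<longleftrightarrow> similar a' a \<and> qcnj a' \<noteq> a"

lemma real_constant_seq_iff:
  assumes "L \<noteq> []"
  shows "real_constant_seq L \<longleftrightarrow> (\<forall>x\<in>set L. x = hd L) \<and> hd L \<in> quat_reals"
proof -
  have "(\<forall>i < length L. L ! i = L ! 0) \<longleftrightarrow> (\<forall>x\<in>set L. x = L ! 0)"
    by (metis in_set_conv_nth)
  then show ?thesis
    using assms by (simp add: real_constant_seq_def hd_conv_nth)
qed

lemma sphere_chain_iff:
  "sphere_chain L \<longleftrightarrow> (\<forall>x\<in>set L. x \<notin> quat_reals) \<and> successively chain_link L"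
proof -
  have "(\<forall>i < length L. L ! i \<notin> quat_reals) \<longleftrightarrow> (\<forall>x\<in>set L. x \<notin> quat_reals)"
    by (metis in_set_conv_nth)
  moreover have "chain_link (L ! i) (L ! (i + 1)) \<longleftrightarrow>
      qRe (L ! (i + 1)) = qRe (L ! i) \<and> qnorm (L ! (i + 1)) = qnorm (L ! i) \<and>
      qcnj (L ! (i + 1)) \<noteq> L ! i" for i
    by (simp add: chain_link_def similar_def qnorm_eq_iff)
  ultimately show ?thesis
    by (simp add: sphere_chain_def successively_conv_nth)
qed

lemma successively_similar_hd:
  "successively (\<lambda>x y. similar y x) L \<Longrightarrow> x \<in> set L \<Longrightarrow> similar x (hd L)"
proof (induction L)
  case (Cons y L)
  show ?case
  proof (cases "x = y")
    case False
    with Cons.prems have "L \<noteq> []" "similar (hd L) y" "similar x (hd L)"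
      using Cons.IH by (auto simp: successively_Cons)
    then show ?thesis
      by (simp add: similar_def)
  qed (simp add: similar_def)
qed simp

lemma similar_hd_if_real_constant_or_sphere_chain:
  assumes "real_constant_seq L \<or> sphere_chain L" and "x \<in> set L"
  shows "similar x (hd L)"
  using assms(1)
proof
  assume "real_constant_seq L"
  moreover have "L \<noteq> []"
    using assms(2) by auto
  ultimately have "x = hd L"
    using assms(2) real_constant_seq_iff by blast
  then show ?thesis
    by (simp add: similar_def)
next
  assume "sphere_chain L"
  then have "successively (\<lambda>x y. similar y x) L"
    by (auto simp: sphere_chain_iff chain_link_def elim: successively_mono)
  then show ?thesis
    using assms(2) by (rule successively_similar_hd)
qed

section \<open>Sufficiency\<close>

lemma multiplicity_seqI:
  assumes "L \<noteq> []" and "\<And>b. right_dvd (qX - qC b) (P_seq L) \<Longrightarrow> b = hd L"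
  shows "multiplicity_seq L"
  using assms by (cases L) (auto simp: multiplicity_seq_def right_dvd_P_seq_hd)

lemma eval_right_P_seq_real_constant:
  assumes "r \<in> quat_reals" and "\<forall>x\<in>set L. x = r"
  shows "eval_right (P_seq L) b = (b - r) ^ length L"
  using assms(2)
proof (induction L rule: rev_induct)
  case (snoc x L)
  obtain u where r: "r = quat_of_real u"
    using assms(1) by (auto simp: quat_reals_def)
  have "eval_right (P_seq (L @ [x])) b = (b - r) ^ length L * b - r * (b - r) ^ length L"
    using snoc by (simp add: P_seq_snoc eval_right_linear_factor)
  also have "\<dots> = (b - r) ^ length L * (b - r)"
    by (simp add: r right_diff_distrib quat_of_real_commute)
  finally show ?case
    by (simp add: power_commutes)
qed (simp add: P_seq_def)

lemma multiplicity_seq_real_constant: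
  assumes "L \<noteq> []" and "real_constant_seq L"
  shows "multiplicity_seq L"
proof (rule multiplicity_seqI[OF assms(1)])
  fix b
  assume "right_dvd (qX - qC b) (P_seq L)"
  then have "(b - hd L) ^ length L = 0"
    using assms real_constant_seq_iff eval_right_P_seq_real_constant eval_right_root by metis
  then show "b = hd L"
    by simp
qed

lemma eval_right_P_seq_chain:
  assumes "successively chain_link L" and "L \<noteq> [] \<Longrightarrow> b \<noteq> hd L"
  shows "\<exists>c. eval_right (P_seq L) b \<noteq> 0 \<and>
    eval_right (P_seq L) b * b = c * eval_right (P_seq L) b \<and>
    similar c b \<and> (if L = [] then c = b else similar b (last L) \<longrightarrow> c = qcnj (last L))"
  using assms
proof (induction L rule: rev_induct)
  case Nil
  then show ?case
    by (auto simp: P_seq_def similar_def)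
next
  case (snoc a L)
  have "successively chain_link L" and link: "L \<noteq> [] \<Longrightarrow> chain_link (last L) a"
    using snoc.prems(1) by (auto simp: successively_append_iff)
  moreover have "L \<noteq> [] \<Longrightarrow> b \<noteq> hd L"
    using snoc.prems(2) by simp
  ultimately obtain c where g: "eval_right (P_seq L) b \<noteq> 0"
    "eval_right (P_seq L) b * b = c * eval_right (P_seq L) b" and "similar c b"
    and c: "if L = [] then c = b else similar b (last L) \<longrightarrow> c = qcnj (last L)"
    using snoc.IH by blast
  have "c \<noteq> a \<and> (similar b a \<longrightarrow> similar c a)"
  proof (cases "L = []")
    case True
    then show ?thesis
      using c snoc.prems(2) by simp
  next
    case False
    then have "similar a (last L)" and "qcnj a \<noteq> last L"
      using link by (auto simp: chain_link_def)
    then show ?thesis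
      using c \<open>similar c b\<close> False by (auto simp: similar_def)
  qed
  then obtain c' where "eval_right (P_seq (L @ [a])) b \<noteq> 0"
    "eval_right (P_seq (L @ [a])) b * b = c' * eval_right (P_seq (L @ [a])) b"
    "similar c' c" "similar c a \<Longrightarrow> c' = qcnj a"
    using intertwining_step[OF g] by (auto simp: P_seq_snoc eval_right_linear_factor)
  then show ?case
    using \<open>similar c b\<close> \<open>c \<noteq> a \<and> _\<close> by (auto simp: similar_def)
qed

lemma multiplicity_seq_chain:
  assumes "L \<noteq> []" and "successively chain_link L"
  shows "multiplicity_seq L"
proof (rule multiplicity_seqI[OF assms(1)])
  fix b
  assume "right_dvd (qX - qC b) (P_seq L)"
  then show "b = hd L"
    using eval_right_P_seq_chain[OF assms(2)] eval_right_root by blast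
qed

section \<open>Necessity\<close>

lemma multiplicity_seq_butlast:
  assumes "multiplicity_seq (L @ [a])" and "L \<noteq> []"
  shows "multiplicity_seq L"
proof (rule multiplicity_seqI[OF assms(2)])
  fix b
  assume "right_dvd (qX - qC b) (P_seq L)"
  then have "right_dvd (qX - qC b) (P_seq (L @ [a]))"
    by (rule right_dvd_P_seq_append)
  then show "b = hd L"
    using assms by (simp add: multiplicity_seq_def)
qed

lemma right_root_similar:
  assumes "\<forall>x\<in>set L. \<not> similar x a"
  shows "\<exists>b. similar b a \<and> right_dvd (qX - qC b) ((qX - qC a) * P_seq L)"
  using assms
proof (induction L arbitrary: a rule: rev_induct)
  case Nil
  show ?case
    by (auto simp: P_seq_def right_dvd_def similar_def)
next
  case (snoc x L)
  have "\<not> similar a x"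
    using snoc.prems by (auto simp: similar_def)
  then obtain t where "similar t a" and t: "(a + x - t) * t = a * x"
    by (rule similar_factor_exchange)
  then have "\<forall>y\<in>set L. \<not> similar y t"
    using snoc.prems by (auto simp: similar_def)
  from snoc.IH[OF this] obtain b Q where "similar b t" and Q: "(qX - qC t) * P_seq L = Q * (qX - qC b)"
    by (auto simp: right_dvd_def)
  have "(qX - qC a) * (qX - qC x) = (qX - qC (a + x - t)) * (qX - qC t)"
    by (rule linear_factors_eq) (simp_all add: t)
  then have "(qX - qC a) * P_seq (L @ [x]) = ((qX - qC (a + x - t)) * Q) * (qX - qC b)"
    by (simp add: P_seq_snoc mult.assoc Q flip: mult.assoc[of "qX - qC a"])
  then show ?case
    using \<open>similar b t\<close> \<open>similar t a\<close> by (auto simp: right_dvd_def similar_def)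
qed

lemma multiplicity_seq_snoc_similar:
  assumes "multiplicity_seq (L @ [a])" and "L \<noteq> []" and "\<forall>x\<in>set L. similar x (hd L)"
  shows "similar a (hd L)"
proof (rule ccontr)
  assume "\<not> similar a (hd L)"
  then have "\<forall>x\<in>set L. \<not> similar x a"
    using assms(3) by (auto simp: similar_def)
  from right_root_similar[OF this]
  obtain b where "similar b a" and "right_dvd (qX - qC b) (P_seq (L @ [a]))"
    by (auto simp: P_seq_snoc)
  moreover have "b = hd L"
    using calculation(2) assms(1,2) by (simp add: multiplicity_seq_def)
  ultimately show False
    using \<open>\<not> similar a (hd L)\<close> by (auto simp: similar_def)
qed

lemma multiplicity_seq_conj_pair:
  assumes "multiplicity_seq (L @ [l, qcnj l])"
  shows "l \<in> quat_reals"
proof -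
  have "P_seq (L @ [l, qcnj l]) = (qX - qC (qcnj l)) * (qX - qC l) * P_seq L"
    using P_seq_snoc[of "L @ [l]"] by (simp add: P_seq_snoc mult.assoc)
  also have "\<dots> = P_seq L * ((qX - qC (qcnj l)) * (qX - qC l))"
    by (rule conj_factors_central)
  finally have "right_dvd (qX - qC l) (P_seq (L @ [l, qcnj l]))"
    and "right_dvd (qX - qC (qcnj l)) (P_seq (L @ [l, qcnj l]))"
    unfolding right_dvd_def by (metis mult.assoc conj_factors_commute)+
  then have "qcnj l = l"
    using assms by (simp add: multiplicity_seq_def)
  then show ?thesis
    by (simp add: qcnj_eq_self_iff)
qed

lemma real_constant_or_sphere_chain:
  "multiplicity_seq L \<Longrightarrow> real_constant_seq L \<or> sphere_chain L"
proof (induction L rule: rev_induct)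
  case Nil
  then show ?case
    by (simp add: multiplicity_seq_def)
next
  case (snoc a L)
  show ?case
  proof (cases "L = []")
    case True
    then show ?thesis
      by (auto simp: real_constant_seq_def sphere_chain_def)
  next
    case False
    have IH: "real_constant_seq L \<or> sphere_chain L"
      using snoc multiplicity_seq_butlast False by blast
    then have "similar a (hd L)"
      using multiplicity_seq_snoc_similar[OF snoc.prems False]
        similar_hd_if_real_constant_or_sphere_chain by blast
    from IH show ?thesis
    proof
      assume "real_constant_seq L"
      then have "a = hd L"
        using \<open>similar a (hd L)\<close> False real_constant_seq_iff similar_real_eq by blast
      then show ?thesis
        using \<open>real_constant_seq L\<close> False by (simp add: real_constant_seq_iff)
    next
      assume "sphere_chain L"
      then have nonreal: "\<forall>x\<in>set L. x \<notin> quat_reals" and "successively chain_link L"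
        by (simp_all add: sphere_chain_iff)
      have "a \<notin> quat_reals"
        using \<open>similar a (hd L)\<close> nonreal False similar_real_eq[of "hd L" a]
        by (auto simp: similar_def)
      moreover have "similar a (last L)"
        using \<open>similar a (hd L)\<close> False
          similar_hd_if_real_constant_or_sphere_chain[of L "last L"] \<open>sphere_chain L\<close>
        by (auto simp: similar_def)
      moreover have "qcnj a \<noteq> last L"
      proof
        assume "qcnj a = last L"
        then obtain L' where "L = L' @ [qcnj a]"
          using False by (metis append_butlast_last_id)
        then have "qcnj a \<in> quat_reals"
          using multiplicity_seq_conj_pair[of L' "qcnj a"] snoc.prems by simp
        then show False
          using nonreal \<open>L = L' @ [qcnj a]\<close> by simp
      qed
      ultimately show ?thesis
        using \<open>successively chain_link L\<close> nonreal False
        by (auto simp: sphere_chain_iff successively_append_iff chain_link_def)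
    qed
  qed
qed

lemma multiplicity_seq_iff:
  "L \<noteq> [] \<Longrightarrow> multiplicity_seq L \<longleftrightarrow> real_constant_seq L \<or> sphere_chain L"
  using real_constant_or_sphere_chain multiplicity_seq_real_constant multiplicity_seq_chain
  by (auto simp: sphere_chain_iff)

lemma multiplicity_seq_replicate:
  assumes "n \<noteq> 0"
  shows "multiplicity_seq (replicate n a)"
proof -
  have "successively chain_link (replicate n a)" if "a \<notin> quat_reals"
    using that by (induction n)
      (auto simp: successively_Cons chain_link_def similar_def qcnj_eq_self_iff)
  then show ?thesis
    using assms by (cases "a \<in> quat_reals")
      (auto simp: multiplicity_seq_iff real_constant_seq_iff sphere_chain_iff)
qed

theorem mainTheorem17:
  shows "(\<forall>as :: quat list. as \<noteq> [] \<longrightarrow>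
           (multiplicity_seq as \<longleftrightarrow>
              ((\<forall>i < length as. as ! i = as ! 0) \<and> as ! 0 \<in> quat_reals)
            \<or> ((\<forall>i < length as. as ! i \<notin> quat_reals) \<and>
               (\<forall>i. i + 1 < length as \<longrightarrow>
                    qRe (as ! (i + 1)) = qRe (as ! i) \<and>
                    qnorm (as ! (i + 1)) = qnorm (as ! i) \<and>
                    qcnj (as ! (i + 1)) \<noteq> as ! i))))
       \<and> (\<forall>(a :: quat) (r :: nat). r \<ge> 1 \<longrightarrow> multiplicity_seq (replicate r a))"
  using multiplicity_seq_iff multiplicity_seq_replicate
  unfolding real_constant_seq_def sphere_chain_def by auto

end
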